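(* Let $\mathcal{X}\subset\mathbb{R}^d$ be compact with diameter $|\mathcal{X}|=\max_{x,x'\in\mathcal{X}}\|x-x'\|$, and let $\epsilon>0$, $\delta\in(0,1)$. Let $\{(x_i,y_i)\}_{i=1}^M\subset\mathcal{X}\times\mathbb{R}$ be a training set and $\sigma_y^2=\frac1M\sum_{i=1}^M y_i^2$. Let $f$ be the quantum (VQC) model with $L$ Pauli encoding gates on each of the $d$ input dimensions, with full freedom on its Fourier coefficients, trained by ridge regression with regularization $\lambda>0$. Let $\tilde f$ be the Random Fourier Features model with $D$ frequencies obtained by distinct sampling, trained on the same dataset with the same regularization $\lambda$. Then $|f(x)-\tilde f(x)|\le\epsilon$ holds with probability at least $1-\delta$ for a number of samples $$D=\Omega\!\left(\frac{d\,C_1(1+\lambda)^2}{\lambda^4\epsilon^2}\left[\log(dL^2|\mathcal{X}|)+\log\frac{C_2(1+\lambda)}{\epsilon\lambda^2}-\log\delta\right]\right),$$ where $C_1,C_2$ are constants depending only on $\sigma_y$ and $|\mathcal{X}|$, and $\Omega(\cdot)$ denotes the asymptotic "Big-Omega" lower-bound notation.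
   Context: Pauli encoding: each of the $L$ encoding gates per input coordinate $x_k$ has the form $e^{-i x_k \sigma/2}$ with $\sigma$ a Pauli matrix, so the frequency spectrum of the model is $\Omega=\{-L,\dots,L\}^d\subset\mathbb{Z}^d$. A VQC model "with full freedom on the Fourier coefficients" is any function $f(x)=\sum_{\omega\in\Omega}a_\omega\cos(\omega^Tx)+b_\omega\sin(\omega^Tx)$ with arbitrary real coefficients, i.e. a linear model $\mathbf{w}^T\phi(x)$ with feature vector $\phi(x)=\frac{1}{\sqrt{|\Omega|}}(\cos(\omega^Tx),\sin(\omega^Tx))_{\omega\in\Omega}$; equivalently a kernel ridge regression with the shift-invariant kernel $k(x,x')=\frac1{|\Omega|}\sum_{\omega\in\Omega}\cos(\omega^T(x-x'))$. Training with regularization $\lambda$ means minimizing $\frac1M\sum_i|\mathbf{w}^T\phi(x_i)-y_i|^2+\lambda\|\mathbf{w}\|^2$. Distinct sampling RFF model: sample $D$ frequencies $\omega_1,\dots,\omega_D$ i.i.d. uniformly from $\Omega$, set $\tilde\phi(x)=\frac1{\sqrt D}(\cos(\omega_j^Tx),\sin(\omega_j^Tx))_{j=1}^D$, and let $\tilde f(x)=\tilde{\mathbf{w}}^T\tilde\phi(x)$ where $\tilde{\mathbf{w}}$ solves the same ridge regression problem with $\tilde\phi$ in place of $\phi$. *)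

theory Defs
  imports "HOL-Analysis.Analysis" "HOL-Probability.Probability"
begin

text \<open>Points of R^d are functions nat => real using coordinates k < d (zero elsewhere);
frequencies in Z^d are functions nat => int.\<close>

definition in_Rd :: "nat \<Rightarrow> (nat \<Rightarrow> real) \<Rightarrow> bool" where
  "in_Rd d x \<longleftrightarrow> (\<forall>k\<ge>d. x k = 0)"

definition dist_d :: "nat \<Rightarrow> (nat \<Rightarrow> real) \<Rightarrow> (nat \<Rightarrow> real) \<Rightarrow> real" where
  "dist_d d x x' = sqrt (\<Sum>k<d. (x k - x' k)^2)"

definition diam_d :: "nat \<Rightarrow> (nat \<Rightarrow> real) set \<Rightarrow> real" where
  "diam_d d X = (SUP p\<in>X \<times> X. dist_d d (fst p) (snd p))"

definition freq_dot :: "nat \<Rightarrow> (nat \<Rightarrow> int) \<Rightarrow> (nat \<Rightarrow> real) \<Rightarrow> real" where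
  "freq_dot d w x = (\<Sum>k<d. of_int (w k) * x k)"

text \<open>Frequency spectrum Omega = {-L..L}^d of the Pauli-encoded VQC.\<close>
definition spectrum :: "nat \<Rightarrow> nat \<Rightarrow> (nat \<Rightarrow> int) set" where
  "spectrum d L = PiE {..<d} (\<lambda>_. {- int L .. int L})"

text \<open>Linear model w^T phi(x) with feature map
  phi(x) = 1/sqrt|I| (cos(freq j ^T x), sin(freq j ^T x))_{j in I};
  the weight vector w is the pair (a, b) of cosine and sine coefficients.\<close>
definition feat_model :: "nat \<Rightarrow> 'i set \<Rightarrow> ('i \<Rightarrow> nat \<Rightarrow> int)
    \<Rightarrow> ('i \<Rightarrow> real) \<times> ('i \<Rightarrow> real) \<Rightarrow> (nat \<Rightarrow> real) \<Rightarrow> real" where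
  "feat_model d I fr w x = (1 / sqrt (real (card I))) *
     (\<Sum>j\<in>I. fst w j * cos (freq_dot d (fr j) x) + snd w j * sin (freq_dot d (fr j) x))"

definition weights :: "'i set \<Rightarrow> (('i \<Rightarrow> real) \<times> ('i \<Rightarrow> real)) set" where
  "weights I = {w. \<forall>j. j \<notin> I \<longrightarrow> fst w j = 0 \<and> snd w j = 0}"

definition ridge_obj :: "nat \<Rightarrow> 'i set \<Rightarrow> ('i \<Rightarrow> nat \<Rightarrow> int) \<Rightarrow> nat
    \<Rightarrow> (nat \<Rightarrow> nat \<Rightarrow> real) \<Rightarrow> (nat \<Rightarrow> real) \<Rightarrow> real
    \<Rightarrow> ('i \<Rightarrow> real) \<times> ('i \<Rightarrow> real) \<Rightarrow> real" where
  "ridge_obj d I fr M xs ys lam w =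
     (1 / real M) * (\<Sum>i<M. (feat_model d I fr w (xs i) - ys i)^2)
     + lam * (\<Sum>j\<in>I. (fst w j)^2 + (snd w j)^2)"

text \<open>The ridge regression solution (unique for lambda > 0).\<close>
definition ridge_weights :: "nat \<Rightarrow> 'i set \<Rightarrow> ('i \<Rightarrow> nat \<Rightarrow> int) \<Rightarrow> nat
    \<Rightarrow> (nat \<Rightarrow> nat \<Rightarrow> real) \<Rightarrow> (nat \<Rightarrow> real) \<Rightarrow> real
    \<Rightarrow> ('i \<Rightarrow> real) \<times> ('i \<Rightarrow> real)" where
  "ridge_weights d I fr M xs ys lam =
     (THE w. w \<in> weights I \<and>
        (\<forall>v\<in>weights I. ridge_obj d I fr M xs ys lam w \<le> ridge_obj d I fr M xs ys lam v))"

definition ridge_model :: "nat \<Rightarrow> 'i set \<Rightarrow> ('i \<Rightarrow> nat \<Rightarrow> int) \<Rightarrow> nat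
    \<Rightarrow> (nat \<Rightarrow> nat \<Rightarrow> real) \<Rightarrow> (nat \<Rightarrow> real) \<Rightarrow> real \<Rightarrow> (nat \<Rightarrow> real) \<Rightarrow> real" where
  "ridge_model d I fr M xs ys lam x = feat_model d I fr (ridge_weights d I fr M xs ys lam) x"

text \<open>VQC with full freedom on the Fourier coefficients, trained by ridge regression.\<close>
definition vqc_model :: "nat \<Rightarrow> nat \<Rightarrow> nat \<Rightarrow> (nat \<Rightarrow> nat \<Rightarrow> real) \<Rightarrow> (nat \<Rightarrow> real)
    \<Rightarrow> real \<Rightarrow> (nat \<Rightarrow> real) \<Rightarrow> real" where
  "vqc_model d L M xs ys lam = ridge_model d (spectrum d L) id M xs ys lam"

definition rff_model :: "nat \<Rightarrow> nat \<Rightarrow> (nat \<Rightarrow> nat \<Rightarrow> int) \<Rightarrow> nat \<Rightarrow> (nat \<Rightarrow> nat \<Rightarrow> real)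
    \<Rightarrow> (nat \<Rightarrow> real) \<Rightarrow> real \<Rightarrow> (nat \<Rightarrow> real) \<Rightarrow> real" where
  "rff_model d D om M xs ys lam = ridge_model d {..<D} om M xs ys lam"

text \<open>Distinct sampling: D frequencies i.i.d. uniform on the spectrum.\<close>
definition distinct_sampling :: "nat \<Rightarrow> nat \<Rightarrow> nat \<Rightarrow> (nat \<Rightarrow> nat \<Rightarrow> int) pmf" where
  "distinct_sampling d L D = Pi_pmf {..<D} (\<lambda>_. 0) (\<lambda>_. pmf_of_set (spectrum d L))"

definition sigma_y :: "nat \<Rightarrow> (nat \<Rightarrow> real) \<Rightarrow> real" where
  "sigma_y M ys = sqrt ((1 / real M) * (\<Sum>i<M. (ys i)^2))"

end

theory Submission
  imports Defs "Jordan_Normal_Form.Determinant"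
begin

(* Both models are kernel ridge regressions, so by the representer theorem their predictions
   have the form (1/(M lam)) sum_i r_i k(x, x_i), where (I + K/(M lam)) r = y and K is the
   positive semidefinite Gram matrix. A perturbation argument for such systems shows that if
   the RFF kernel is eta-close to the VQC kernel on all differences x - x' of points of X, the
   predictions differ by at most eta sigma_y (1 + lam) / lam^2. Both kernels are shift
   invariant: the RFF kernel at z is the empirical mean of cos (omega^T z) over the sampled
   frequencies, whose expectation is the VQC kernel. Hoeffding's inequality at the points of
   a grid of mesh eta / (4 d L), a union bound over the grid and the d L-Lipschitz continuity
   of both kernels give eta-closeness on X - X, with failure probability at most delta for the
   stated number of samples. *)

unbundle no vec_syntax

section \<open>Positive semidefinite linear systems\<close>

definition psd_matrix :: "nat \<Rightarrow> (nat \<Rightarrow> nat \<Rightarrow> real) \<Rightarrow> bool" where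
  "psd_matrix M K \<longleftrightarrow> (\<forall>e. 0 \<le> (\<Sum>i<M. \<Sum>l<M. e i * K i l * e l))"

lemma psd_system_solution_norm_le:
  assumes psd: "psd_matrix M K" and c: "c \<ge> 0"
    and sol: "\<And>i. i < M \<Longrightarrow> r i + c * (\<Sum>l<M. K i l * r l) = y i"
  shows "(\<Sum>i<M. (r i)\<^sup>2) \<le> (\<Sum>i<M. (y i)\<^sup>2)"
proof -
  define q where "q i = (\<Sum>l<M. K i l * r l)" for i
  have "(\<Sum>i<M. (y i)\<^sup>2) = (\<Sum>i<M. (r i + c * q i)\<^sup>2)"
    using sol by (simp add: q_def)
  also have "\<dots> = (\<Sum>i<M. (r i)\<^sup>2) + 2 * c * (\<Sum>i<M. \<Sum>l<M. r i * K i l * r l)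
      + c\<^sup>2 * (\<Sum>i<M. (q i)\<^sup>2)"
    by (simp add: power2_eq_square algebra_simps sum.distrib sum_distrib_left q_def)
  finally have "(\<Sum>i<M. (y i)\<^sup>2) = (\<Sum>i<M. (r i)\<^sup>2)
      + 2 * c * (\<Sum>i<M. \<Sum>l<M. r i * K i l * r l) + c\<^sup>2 * (\<Sum>i<M. (q i)\<^sup>2)" .
  moreover have "0 \<le> 2 * c * (\<Sum>i<M. \<Sum>l<M. r i * K i l * r l)"
    using psd c unfolding psd_matrix_def by simp
  moreover have "0 \<le> c\<^sup>2 * (\<Sum>i<M. (q i)\<^sup>2)"
    by (simp add: sum_nonneg)
  ultimately show ?thesis by linarith
qed

lemma psd_system_solvable:
  assumes psd: "psd_matrix M K" and c: "c \<ge> 0"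
  shows "\<exists>r. \<forall>i<M. r i + c * (\<Sum>l<M. K i l * r l) = y i"
proof -
  define A where "A = mat M M (\<lambda>(i, l). (if i = l then 1 else 0) + c * K i l)"
  have A: "A \<in> carrier_mat M M" by (simp add: A_def)
  have A_mult: "(A *\<^sub>v v) $ i = v $ i + c * (\<Sum>l<M. K i l * v $ l)"
    if v: "v \<in> carrier_vec M" and i: "i < M" for v i
  proof -
    have "(A *\<^sub>v v) $ i = (\<Sum>l<M. (if i = l then v $ l else 0) + c * (K i l * v $ l))"
      using v i by (auto simp: A_def scalar_prod_def lessThan_atLeast0 algebra_simps intro!: sum.cong)
    also have "\<dots> = v $ i + c * (\<Sum>l<M. K i l * v $ l)"
      using i by (simp add: sum.distrib sum_distrib_left)
    finally show ?thesis .
  qed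
  have "det A \<noteq> 0"
  proof
    assume "det A = 0"
    then obtain v where v: "v \<in> carrier_vec M" "v \<noteq> 0\<^sub>v M" "A *\<^sub>v v = 0\<^sub>v M"
      using det_0_iff_vec_prod_zero_field[OF A] by blast
    have "(\<Sum>i<M. (v $ i)\<^sup>2) \<le> (\<Sum>i<M. 0\<^sup>2)"
      by (rule psd_system_solution_norm_le[OF psd c]) (metis A_mult v(1,3) index_zero_vec(1))
    then have "(\<Sum>i<M. (v $ i)\<^sup>2) = 0"
      by (simp add: antisym sum_nonneg)
    then have "\<forall>i\<in>{..<M}. (v $ i)\<^sup>2 = 0"
      by (simp add: sum_nonneg_eq_0_iff)
    with v show False by auto
  qed
  then obtain B where B: "B \<in> carrier_mat M M" and AB: "A * B = 1\<^sub>m M"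
    using det_non_zero_imp_unit[OF A, of "()"] unfolding Units_def ring_mat_def by auto
  define r where "r = B *\<^sub>v vec M y"
  have r: "r \<in> carrier_vec M" using B by (simp add: r_def)
  have "A *\<^sub>v r = vec M y"
    using assoc_mult_mat_vec[OF A B, of "vec M y"] AB by (simp add: r_def)
  then show ?thesis
    using A_mult[OF r] by (metis index_vec)
qed

lemma sum_abs_le_sqrt_card_mult_sqrt_sum_squares:
  "(\<Sum>i<M. \<bar>v i\<bar>) \<le> sqrt (real M) * sqrt (\<Sum>i<M. (v i :: real)\<^sup>2)"
proof -
  have "(\<Sum>i<M. \<bar>v i\<bar>)\<^sup>2 \<le> (\<Sum>i<M. (v i)\<^sup>2) * real M"
    using sum_squared_le_sum_of_squares[of "\<lambda>i. \<bar>v i\<bar>" "{..<M}"] by simp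
  then have "(\<Sum>i<M. \<bar>v i\<bar>) \<le> sqrt ((\<Sum>i<M. (v i)\<^sup>2) * real M)"
    by (rule real_le_rsqrt)
  then show ?thesis
    by (simp add: real_sqrt_mult mult.commute)
qed

lemma le_of_sq_le_mult:
  fixes x a :: real
  assumes "x\<^sup>2 \<le> a * x" "x \<ge> 0" "a \<ge> 0"
  shows "x \<le> a"
  using assms by (cases "x = 0") (auto simp: power2_eq_square)

lemma abs_bilinear_form_le:
  assumes "\<And>i l. i < M \<Longrightarrow> l < M \<Longrightarrow> \<bar>B i l\<bar> \<le> eta"
  shows "\<bar>\<Sum>i<M. \<Sum>l<M. a i * B i l * b l\<bar>
    \<le> eta * real M * sqrt (\<Sum>i<M. (a i)\<^sup>2) * sqrt (\<Sum>l<M. (b l)\<^sup>2)"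
proof -
  have "\<bar>\<Sum>i<M. \<Sum>l<M. a i * B i l * b l\<bar> \<le> (\<Sum>i<M. \<Sum>l<M. \<bar>a i * B i l * b l\<bar>)"
    by (intro order_trans[OF sum_abs] sum_mono sum_abs)
  also have "\<dots> \<le> (\<Sum>i<M. \<Sum>l<M. \<bar>a i\<bar> * eta * \<bar>b l\<bar>)"
    using assms by (intro sum_mono) (simp add: abs_mult mult_left_mono mult_right_mono)
  also have "\<dots> = eta * (\<Sum>i<M. \<bar>a i\<bar>) * (\<Sum>l<M. \<bar>b l\<bar>)"
    by (simp add: sum_distrib_left sum_distrib_right mult_ac)
  also have "\<dots> \<le> eta * (sqrt (real M) * sqrt (\<Sum>i<M. (a i)\<^sup>2)) * (sqrt (real M) * sqrt (\<Sum>l<M. (b l)\<^sup>2))"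
  proof (cases M)
    case (Suc m)
    then have "0 \<le> eta"
      using assms[of 0 0] by simp
    then show ?thesis
      by (intro mult_mono mult_left_mono sum_abs_le_sqrt_card_mult_sqrt_sum_squares)
         (auto simp: sum_nonneg)
  qed simp
  also have "\<dots> = eta * (sqrt (real M) * sqrt (real M)) * sqrt (\<Sum>i<M. (a i)\<^sup>2) * sqrt (\<Sum>l<M. (b l)\<^sup>2)"
    by (simp only: mult_ac)
  also have "sqrt (real M) * sqrt (real M) = real M"
    by simp
  finally show ?thesis .
qed

lemma psd_system_perturbation:
  assumes psd: "psd_matrix M K" and c: "c \<ge> 0"
    and sol: "\<And>i. i < M \<Longrightarrow> r i + c * (\<Sum>l<M. K i l * r l) = y i"
    and sol': "\<And>i. i < M \<Longrightarrow> r' i + c * (\<Sum>l<M. K' i l * r' l) = y i"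
    and close: "\<And>i l. i < M \<Longrightarrow> l < M \<Longrightarrow> \<bar>K i l - K' i l\<bar> \<le> eta"
  shows "sqrt (\<Sum>i<M. (r i - r' i)\<^sup>2) \<le> c * real M * eta * sqrt (\<Sum>i<M. (r' i)\<^sup>2)"
proof (cases M)
  case 0
  then show ?thesis by simp
next
  case (Suc m)
  then have eta: "0 \<le> eta"
    using close[of 0 0] by simp
  define e where "e i = r i - r' i" for i
  define Qe where "Qe = (\<Sum>i<M. (e i)\<^sup>2)"
  define Qr where "Qr = (\<Sum>i<M. (r' i)\<^sup>2)"
  \<comment> \<open>The error solves the same system with right-hand side \<open>c (K' - K) r'\<close>.\<close>
  have e_sol: "e i + c * (\<Sum>l<M. K i l * e l) = c * (\<Sum>l<M. (K' i l - K i l) * r' l)"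
    if "i < M" for i
    using sol[OF that] sol'[OF that]
    by (simp add: e_def algebra_simps sum_subtractf)
  have "Qe + c * (\<Sum>i<M. \<Sum>l<M. e i * K i l * e l)
      = (\<Sum>i<M. e i * (e i + c * (\<Sum>l<M. K i l * e l)))"
    by (simp add: Qe_def power2_eq_square algebra_simps sum.distrib sum_distrib_left)
  also have "\<dots> = (\<Sum>i<M. e i * (c * (\<Sum>l<M. (K' i l - K i l) * r' l)))"
    by (intro sum.cong) (simp_all add: e_sol)
  also have "\<dots> = c * (\<Sum>i<M. \<Sum>l<M. e i * (K' i l - K i l) * r' l)"
    by (simp add: sum_distrib_left mult_ac)
  also have "\<dots> \<le> c * (eta * real M * sqrt Qe * sqrt Qr)"
    unfolding Qe_def Qr_def using c close
    by (intro mult_left_mono order_trans[OF abs_ge_self abs_bilinear_form_le])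
       (simp_all add: abs_minus_commute)
  finally have "Qe + c * (\<Sum>i<M. \<Sum>l<M. e i * K i l * e l) \<le> (c * real M * eta * sqrt Qr) * sqrt Qe"
    by (simp add: mult_ac)
  moreover have "0 \<le> c * (\<Sum>i<M. \<Sum>l<M. e i * K i l * e l)"
    using psd c unfolding psd_matrix_def by simp
  ultimately have "(sqrt Qe)\<^sup>2 \<le> (c * real M * eta * sqrt Qr) * sqrt Qe"
    by (simp add: Qe_def sum_nonneg)
  then have "sqrt Qe \<le> c * real M * eta * sqrt Qr"
    by (rule le_of_sq_le_mult) (use c eta in \<open>simp_all add: Qe_def Qr_def sum_nonneg\<close>)
  then show ?thesis
    by (simp add: Qe_def Qr_def e_def)
qed

lemma sqrt_sum_squares_eq_sigma_y:
  "M > 0 \<Longrightarrow> sqrt (\<Sum>i<M. (y i)\<^sup>2) = sqrt (real M) * sigma_y M y"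
  by (simp add: sigma_y_def flip: real_sqrt_mult)

lemma abs_sum_mult_diff_le:
  assumes bounded: "\<And>i. i < M \<Longrightarrow> \<bar>k i\<bar> \<le> 1"
    and close: "\<And>i. i < M \<Longrightarrow> \<bar>k i - k' i\<bar> \<le> eta"
  shows "\<bar>(\<Sum>i<M. r i * k i) - (\<Sum>i<M. r' i * k' i)\<bar>
    \<le> sqrt (real M) * (sqrt (\<Sum>i<M. (r i - r' i)\<^sup>2) + eta * sqrt (\<Sum>i<M. (r' i)\<^sup>2))"
proof (cases M)
  case 0
  then show ?thesis by simp
next
  case (Suc m)
  then have eta: "0 \<le> eta"
    using close[of 0] by simp
  have "\<bar>\<Sum>i<M. (r i - r' i) * k i\<bar> \<le> (\<Sum>i<M. \<bar>r i - r' i\<bar>)"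
    using bounded by (intro order_trans[OF sum_abs] sum_mono) (simp add: abs_mult mult_left_le)
  also have "\<dots> \<le> sqrt (real M) * sqrt (\<Sum>i<M. (r i - r' i)\<^sup>2)"
    by (rule sum_abs_le_sqrt_card_mult_sqrt_sum_squares)
  finally have first: "\<bar>\<Sum>i<M. (r i - r' i) * k i\<bar> \<le> sqrt (real M) * sqrt (\<Sum>i<M. (r i - r' i)\<^sup>2)" .
  have "\<bar>\<Sum>i<M. r' i * (k i - k' i)\<bar> \<le> (\<Sum>i<M. \<bar>r' i\<bar> * eta)"
    using close by (intro order_trans[OF sum_abs] sum_mono) (simp add: abs_mult mult_left_mono)
  also have "\<dots> = eta * (\<Sum>i<M. \<bar>r' i\<bar>)"
    by (simp add: sum_distrib_left mult.commute)
  also have "\<dots> \<le> eta * (sqrt (real M) * sqrt (\<Sum>i<M. (r' i)\<^sup>2))"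
    using sum_abs_le_sqrt_card_mult_sqrt_sum_squares eta by (rule mult_left_mono)
  finally have second: "\<bar>\<Sum>i<M. r' i * (k i - k' i)\<bar> \<le> eta * (sqrt (real M) * sqrt (\<Sum>i<M. (r' i)\<^sup>2))" .
  have "(\<Sum>i<M. r i * k i) - (\<Sum>i<M. r' i * k' i)
      = (\<Sum>i<M. (r i - r' i) * k i) + (\<Sum>i<M. r' i * (k i - k' i))"
    by (simp add: algebra_simps sum.distrib sum_subtractf)
  then show ?thesis
    using first second by (simp add: algebra_simps order_trans[OF abs_triangle_ineq] add_mono)
qed

lemma ridge_prediction_perturbation:
  assumes lam: "lam > 0" and psd: "psd_matrix M K" and psd': "psd_matrix M K'"
    and sol: "\<And>i. i < M \<Longrightarrow> r i + (1 / (real M * lam)) * (\<Sum>l<M. K i l * r l) = y i"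
    and sol': "\<And>i. i < M \<Longrightarrow> r' i + (1 / (real M * lam)) * (\<Sum>l<M. K' i l * r' l) = y i"
    and close: "\<And>i l. i < M \<Longrightarrow> l < M \<Longrightarrow> \<bar>K i l - K' i l\<bar> \<le> eta"
    and bounded: "\<And>i. i < M \<Longrightarrow> \<bar>k i\<bar> \<le> 1"
    and close_k: "\<And>i. i < M \<Longrightarrow> \<bar>k i - k' i\<bar> \<le> eta"
  shows "\<bar>(1 / (real M * lam)) * (\<Sum>i<M. r i * k i) - (1 / (real M * lam)) * (\<Sum>i<M. r' i * k' i)\<bar>
    \<le> eta * sigma_y M y * (1 + lam) / lam\<^sup>2"
proof (cases M)
  case 0
  then show ?thesis by (simp add: sigma_y_def)
next
  case (Suc m)
  then have eta: "0 \<le> eta"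
    using close[of 0 0] by simp
  define c where "c = 1 / (real M * lam)"
  have c: "c > 0"
    using lam Suc by (simp add: c_def)
  define Qr where "Qr = (\<Sum>i<M. (r' i)\<^sup>2)"
  define Qy where "Qy = (\<Sum>i<M. (y i)\<^sup>2)"
  have "Qr \<le> Qy"
    unfolding Qr_def Qy_def
    by (rule psd_system_solution_norm_le[OF psd' less_imp_le[OF c]]) (simp only: c_def sol')
  then have sqrt_Qr: "sqrt Qr \<le> sqrt Qy"
    by simp
  have "sqrt (\<Sum>i<M. (r i - r' i)\<^sup>2) \<le> c * real M * eta * sqrt Qr"
    unfolding Qr_def
    by (rule psd_system_perturbation[OF psd less_imp_le[OF c], where K'=K'])
       (simp_all only: c_def sol sol' close)
  also have "c * real M = 1 / lam"
    using Suc by (simp add: c_def)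
  finally have perturbation:
    "sqrt (\<Sum>i<M. (r i - r' i)\<^sup>2) + eta * sqrt Qr \<le> eta * (1 + lam) / lam * sqrt Qr"
    using lam by (simp add: field_simps)
  have "\<bar>c * (\<Sum>i<M. r i * k i) - c * (\<Sum>i<M. r' i * k' i)\<bar>
      = c * \<bar>(\<Sum>i<M. r i * k i) - (\<Sum>i<M. r' i * k' i)\<bar>"
    using c by (simp add: abs_mult flip: right_diff_distrib)
  also have "\<dots> \<le> c * (sqrt (real M) * (sqrt (\<Sum>i<M. (r i - r' i)\<^sup>2) + eta * sqrt Qr))"
    unfolding Qr_def using c bounded close_k by (intro mult_left_mono abs_sum_mult_diff_le) auto
  also have "\<dots> \<le> c * (sqrt (real M) * (eta * (1 + lam) / lam * sqrt Qy))"
    using perturbation sqrt_Qr c eta lam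
    by (intro mult_left_mono order_trans[OF _ mult_left_mono[OF sqrt_Qr]]) simp_all
  also have "\<dots> = eta * (1 + lam) / lam * (c * sqrt (real M) * sqrt Qy)"
    by (simp add: mult_ac)
  also have "c * sqrt (real M) * sqrt Qy = c * real M * sigma_y M y"
  proof -
    have "sqrt Qy = sqrt (real M) * sigma_y M y"
      unfolding Qy_def using Suc by (intro sqrt_sum_squares_eq_sigma_y) simp
    then have "c * sqrt (real M) * sqrt Qy = c * (sqrt (real M) * sqrt (real M)) * sigma_y M y"
      by (simp only: mult_ac)
    then show ?thesis
      by simp
  qed
  finally show ?thesis
    using Suc by (simp add: c_def power2_eq_square mult_ac)
qed

section \<open>Ridge regression with trigonometric features\<close>

definition feature_kernel :: "nat \<Rightarrow> 'i set \<Rightarrow> ('i \<Rightarrow> nat \<Rightarrow> int)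
    \<Rightarrow> (nat \<Rightarrow> real) \<Rightarrow> (nat \<Rightarrow> real) \<Rightarrow> real" where
  "feature_kernel d I fr x x' = (1 / real (card I)) *
     (\<Sum>j\<in>I. cos (freq_dot d (fr j) x) * cos (freq_dot d (fr j) x')
        + sin (freq_dot d (fr j) x) * sin (freq_dot d (fr j) x'))"

lemma psd_matrix_feature_kernel:
  "psd_matrix M (\<lambda>i l. feature_kernel d I fr (xs i) (xs l))"
  unfolding psd_matrix_def
proof
  fix e :: "nat \<Rightarrow> real"
  define C where "C j i = cos (freq_dot d (fr j) (xs i))" for j i
  define S where "S j i = sin (freq_dot d (fr j) (xs i))" for j i
  have "(\<Sum>i<M. \<Sum>l<M. e i * feature_kernel d I fr (xs i) (xs l) * e l)
      = (1 / real (card I)) * (\<Sum>i<M. \<Sum>l<M. \<Sum>j\<in>I. e i * e l * (C j i * C j l + S j i * S j l))"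
    by (simp add: feature_kernel_def C_def S_def sum_distrib_left sum_distrib_right mult_ac)
  also have "(\<Sum>i<M. \<Sum>l<M. \<Sum>j\<in>I. e i * e l * (C j i * C j l + S j i * S j l))
      = (\<Sum>j\<in>I. \<Sum>i<M. \<Sum>l<M. e i * e l * (C j i * C j l + S j i * S j l))"
    by (subst sum.swap) (simp add: sum.swap[of _ I])
  also have "\<dots> = (\<Sum>j\<in>I. (\<Sum>i<M. e i * C j i)\<^sup>2 + (\<Sum>i<M. e i * S j i)\<^sup>2)"
    by (simp add: power2_eq_square sum_product algebra_simps sum.distrib)
  finally show "0 \<le> (\<Sum>i<M. \<Sum>l<M. e i * feature_kernel d I fr (xs i) (xs l) * e l)"
    by (simp add: sum_nonneg)
qed

lemma feat_model_diff:
  "feat_model d I fr (v - w) x = feat_model d I fr v x - feat_model d I fr w x"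
  by (simp add: feat_model_def sum_subtractf algebra_simps)

text \<open>The weight vector \<open>(1 / (M \<lambda>)) \<Sum>\<^sub>i r\<^sub>i \<phi>(x\<^sub>i)\<close> of the representer theorem.\<close>
definition representer_weights :: "nat \<Rightarrow> 'i set \<Rightarrow> ('i \<Rightarrow> nat \<Rightarrow> int) \<Rightarrow> nat
    \<Rightarrow> (nat \<Rightarrow> nat \<Rightarrow> real) \<Rightarrow> real \<Rightarrow> (nat \<Rightarrow> real) \<Rightarrow> ('i \<Rightarrow> real) \<times> ('i \<Rightarrow> real)" where
  "representer_weights d I fr M xs lam r =
     (\<lambda>j. if j \<in> I then (\<Sum>i<M. r i * cos (freq_dot d (fr j) (xs i)))
                          / (real M * lam * sqrt (real (card I))) else 0,
      \<lambda>j. if j \<in> I then (\<Sum>i<M. r i * sin (freq_dot d (fr j) (xs i)))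
                          / (real M * lam * sqrt (real (card I))) else 0)"

lemma representer_weights_in_weights: "representer_weights d I fr M xs lam r \<in> weights I"
  by (simp add: weights_def representer_weights_def)

lemma feat_model_representer_weights:
  "feat_model d I fr (representer_weights d I fr M xs lam r) x
     = (1 / (real M * lam)) * (\<Sum>i<M. r i * feature_kernel d I fr x (xs i))"
proof -
  define w where "w = representer_weights d I fr M xs lam r"
  define a where "a = 1 / (real M * lam * sqrt (real (card I)))"
  define C where "C j x = cos (freq_dot d (fr j) x)" for j x
  define S where "S j x = sin (freq_dot d (fr j) x)" for j x
  have "feat_model d I fr w x
      = 1 / sqrt (real (card I)) * (\<Sum>j\<in>I. a * (\<Sum>i<M. r i * (C j x * C j (xs i) + S j x * S j (xs i))))"
    unfolding feat_model_def
    by (intro arg_cong[where f="\<lambda>t. _ * t"] sum.cong refl)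
       (simp add: w_def a_def representer_weights_def C_def S_def sum_distrib_left sum_divide_distrib
         sum_distrib_right sum.distrib algebra_simps)
  also have "\<dots> = a / sqrt (real (card I)) * (\<Sum>i<M. \<Sum>j\<in>I. r i * (C j x * C j (xs i) + S j x * S j (xs i)))"
    by (simp add: sum_distrib_left sum.swap[of _ I])
  also have "a / sqrt (real (card I)) = (1 / (real M * lam)) * (1 / real (card I))"
    by (simp add: a_def)
  finally show ?thesis
    by (simp add: w_def feature_kernel_def C_def S_def sum_distrib_left mult_ac)
qed

lemma inner_representer_weights:
  "(\<Sum>j\<in>I. fst (representer_weights d I fr M xs lam r) j * fst u j
      + snd (representer_weights d I fr M xs lam r) j * snd u j)
     = (1 / (real M * lam)) * (\<Sum>i<M. r i * feat_model d I fr u (xs i))"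
proof -
  define a where "a = 1 / (real M * lam * sqrt (real (card I)))"
  define C where "C j x = cos (freq_dot d (fr j) x)" for j x
  define S where "S j x = sin (freq_dot d (fr j) x)" for j x
  have "(\<Sum>j\<in>I. fst (representer_weights d I fr M xs lam r) j * fst u j
      + snd (representer_weights d I fr M xs lam r) j * snd u j)
      = (\<Sum>j\<in>I. a * (\<Sum>i<M. r i * (fst u j * C j (xs i) + snd u j * S j (xs i))))"
    by (intro sum.cong refl)
       (simp add: a_def representer_weights_def C_def S_def sum_distrib_left sum_divide_distrib
         sum_distrib_right sum.distrib algebra_simps)
  also have "\<dots> = a * (\<Sum>i<M. r i * (\<Sum>j\<in>I. fst u j * C j (xs i) + snd u j * S j (xs i)))"
    by (simp add: sum_distrib_left sum.swap[of _ I])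
  also have "a = (1 / (real M * lam)) * (1 / sqrt (real (card I)))"
    by (simp add: a_def)
  finally show ?thesis
    by (simp add: feat_model_def C_def S_def sum_distrib_left mult_ac)
qed

lemma sum_squares_weights_expand:
  fixes v w :: "('i \<Rightarrow> real) \<times> ('i \<Rightarrow> real)"
  shows "(\<Sum>j\<in>I. (fst v j)\<^sup>2 + (snd v j)\<^sup>2)
     = (\<Sum>j\<in>I. (fst w j)\<^sup>2 + (snd w j)\<^sup>2)
       + 2 * (\<Sum>j\<in>I. fst w j * fst (v - w) j + snd w j * snd (v - w) j)
       + (\<Sum>j\<in>I. (fst (v - w) j)\<^sup>2 + (snd (v - w) j)\<^sup>2)"
proof -
  have "(\<Sum>j\<in>I. (fst v j)\<^sup>2 + (snd v j)\<^sup>2)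
      = (\<Sum>j\<in>I. ((fst w j)\<^sup>2 + (snd w j)\<^sup>2)
          + 2 * (fst w j * fst (v - w) j + snd w j * snd (v - w) j)
          + ((fst (v - w) j)\<^sup>2 + (snd (v - w) j)\<^sup>2))"
    by (intro sum.cong) (simp_all add: power2_eq_square algebra_simps)
  then show ?thesis
    by (simp add: sum.distrib sum_distrib_left)
qed

lemma ridge_obj_representer_expansion:
  assumes lam: "lam > 0"
    and sol: "\<And>i. i < M \<Longrightarrow>
      r i + (1 / (real M * lam)) * (\<Sum>l<M. feature_kernel d I fr (xs i) (xs l) * r l) = ys i"
  defines "w0 \<equiv> representer_weights d I fr M xs lam r"
  shows "ridge_obj d I fr M xs ys lam v = ridge_obj d I fr M xs ys lam w0
     + (1 / real M) * (\<Sum>i<M. (feat_model d I fr (v - w0) (xs i))\<^sup>2)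
     + lam * (\<Sum>j\<in>I. (fst (v - w0) j)\<^sup>2 + (snd (v - w0) j)\<^sup>2)"
proof -
  define u where "u = v - w0"
  define g where "g i = feat_model d I fr u (xs i)" for i
  have residual: "feat_model d I fr w0 (xs i) - ys i = - r i" if "i < M" for i
    using sol[OF that]
    by (simp add: w0_def feat_model_representer_weights mult.commute[of "r _"])
  have data: "(\<Sum>i<M. (feat_model d I fr v (xs i) - ys i)\<^sup>2)
      = (\<Sum>i<M. (r i)\<^sup>2) - 2 * (\<Sum>i<M. r i * g i) + (\<Sum>i<M. (g i)\<^sup>2)"
  proof -
    have "(\<Sum>i<M. (feat_model d I fr v (xs i) - ys i)\<^sup>2)
        = (\<Sum>i<M. (r i)\<^sup>2 - 2 * (r i * g i) + (g i)\<^sup>2)"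
    proof (intro sum.cong refl)
      fix i assume "i \<in> {..<M}"
      then have "feat_model d I fr v (xs i) - ys i = g i - r i"
        using residual[of i] by (simp add: g_def u_def feat_model_diff)
      then show "(feat_model d I fr v (xs i) - ys i)\<^sup>2 = (r i)\<^sup>2 - 2 * (r i * g i) + (g i)\<^sup>2"
        by (simp only:) (simp add: power2_diff algebra_simps)
    qed
    then show ?thesis
      by (simp add: sum.distrib sum_subtractf sum_distrib_left)
  qed
  have penalty: "(\<Sum>j\<in>I. (fst v j)\<^sup>2 + (snd v j)\<^sup>2)
      = (\<Sum>j\<in>I. (fst w0 j)\<^sup>2 + (snd w0 j)\<^sup>2)
        + 2 * ((1 / (real M * lam)) * (\<Sum>i<M. r i * g i))
        + (\<Sum>j\<in>I. (fst u j)\<^sup>2 + (snd u j)\<^sup>2)"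
    unfolding sum_squares_weights_expand[where v=v and w=w0]
    by (simp only: w0_def inner_representer_weights g_def u_def)
  have obj_w0: "ridge_obj d I fr M xs ys lam w0
      = (1 / real M) * (\<Sum>i<M. (r i)\<^sup>2) + lam * (\<Sum>j\<in>I. (fst w0 j)\<^sup>2 + (snd w0 j)\<^sup>2)"
    by (simp add: ridge_obj_def residual)
  \<comment> \<open>The cross terms cancel because \<open>\<lambda> \<cdot> 1 / (M \<lambda>) = 1 / M\<close>.\<close>
  show ?thesis
    unfolding ridge_obj_def[of _ _ _ _ _ _ _ v] data penalty obj_w0 u_def[symmetric] g_def[symmetric]
    using lam by (simp add: divide_simps) (simp add: algebra_simps)
qed

lemma ridge_weights_eq_representer_weights:
  assumes fin: "finite I" and lam: "lam > 0"
    and sol: "\<And>i. i < M \<Longrightarrow>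
      r i + (1 / (real M * lam)) * (\<Sum>l<M. feature_kernel d I fr (xs i) (xs l) * r l) = ys i"
  shows "ridge_weights d I fr M xs ys lam = representer_weights d I fr M xs lam r"
  unfolding ridge_weights_def
proof (rule the_equality)
  define w0 where "w0 = representer_weights d I fr M xs lam r"
  define obj where "obj = ridge_obj d I fr M xs ys lam"
  have expansion: "obj v = obj w0
      + (1 / real M) * (\<Sum>i<M. (feat_model d I fr (v - w0) (xs i))\<^sup>2)
      + lam * (\<Sum>j\<in>I. (fst (v - w0) j)\<^sup>2 + (snd (v - w0) j)\<^sup>2)" for v
    unfolding obj_def w0_def using lam sol by (rule ridge_obj_representer_expansion)
  have "obj w0 \<le> obj v" for v
    unfolding expansion[of v] using lam by (simp add: sum_nonneg)
  then show "w0 \<in> weights I \<and> (\<forall>v\<in>weights I. obj w0 \<le> obj v)"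
    by (simp add: w0_def representer_weights_in_weights)
  fix w assume w: "w \<in> weights I \<and> (\<forall>v\<in>weights I. obj w \<le> obj v)"
  then have "obj w \<le> obj w0"
    by (simp add: w0_def representer_weights_in_weights)
  moreover have "0 \<le> (1 / real M) * (\<Sum>i<M. (feat_model d I fr (w - w0) (xs i))\<^sup>2)"
    by (simp add: sum_nonneg)
  ultimately have "lam * (\<Sum>j\<in>I. (fst (w - w0) j)\<^sup>2 + (snd (w - w0) j)\<^sup>2) \<le> 0"
    unfolding expansion[of w] by linarith
  then have "(\<Sum>j\<in>I. (fst (w - w0) j)\<^sup>2 + (snd (w - w0) j)\<^sup>2) = 0"
    using lam by (simp add: mult_le_0_iff antisym sum_nonneg)
  then have "fst w j = fst w0 j \<and> snd w j = snd w0 j" for j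
    using fin w by (cases "j \<in> I")
      (simp_all add: sum_nonneg_eq_0_iff add_nonneg_eq_0_iff weights_def w0_def representer_weights_def)
  then show "w = w0"
    by (simp add: prod_eq_iff fun_eq_iff)
qed

lemma ridge_model_eq_kernel_expansion:
  assumes "finite I" and "lam > 0"
  obtains r where
    "\<And>i. i < M \<Longrightarrow> r i + (1 / (real M * lam)) * (\<Sum>l<M. feature_kernel d I fr (xs i) (xs l) * r l) = ys i"
    "\<And>x. ridge_model d I fr M xs ys lam x = (1 / (real M * lam)) * (\<Sum>i<M. r i * feature_kernel d I fr x (xs i))"
proof -
  have "0 \<le> 1 / (real M * lam)"
    using \<open>lam > 0\<close> by simp
  then obtain r where sol:
    "\<forall>i<M. r i + (1 / (real M * lam)) * (\<Sum>l<M. feature_kernel d I fr (xs i) (xs l) * r l) = ys i"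
    using psd_system_solvable[OF psd_matrix_feature_kernel] by blast
  have "ridge_weights d I fr M xs ys lam = representer_weights d I fr M xs lam r"
    using assms sol by (intro ridge_weights_eq_representer_weights) auto
  with sol show ?thesis
    by (intro that[of r]) (simp_all add: ridge_model_def feat_model_representer_weights)
qed

section \<open>Shift-invariant kernels\<close>

definition shift_kernel :: "nat \<Rightarrow> 'i set \<Rightarrow> ('i \<Rightarrow> nat \<Rightarrow> int) \<Rightarrow> (nat \<Rightarrow> real) \<Rightarrow> real" where
  "shift_kernel d I fr z = (1 / real (card I)) * (\<Sum>j\<in>I. cos (freq_dot d (fr j) z))"

lemma freq_dot_diff: "freq_dot d w (x - x') = freq_dot d w x - freq_dot d w x'"
  by (simp add: freq_dot_def sum_subtractf right_diff_distrib)

lemma feature_kernel_eq_shift_kernel: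
  "feature_kernel d I fr x x' = shift_kernel d I fr (x - x')"
  by (simp add: feature_kernel_def shift_kernel_def freq_dot_diff cos_diff)

lemma abs_shift_kernel_le_1: "\<bar>shift_kernel d I fr z\<bar> \<le> 1"
proof -
  have "\<bar>\<Sum>j\<in>I. cos (freq_dot d (fr j) z)\<bar> \<le> real (card I)"
    using sum_bounded_above[of I "\<lambda>j. \<bar>cos (freq_dot d (fr j) z)\<bar>" 1]
    by (intro order_trans[OF sum_abs]) simp
  then show ?thesis
    by (cases "card I = 0") (simp_all add: shift_kernel_def abs_mult divide_le_eq_1)
qed

lemma shift_kernel_eq_1:
  assumes "finite I" "I \<noteq> {}" "\<And>k. k < d \<Longrightarrow> z k = 0"
  shows "shift_kernel d I fr z = 1"
  using assms by (simp add: shift_kernel_def freq_dot_def)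

lemma abs_cos_diff_le: "\<bar>cos a - cos b\<bar> \<le> \<bar>a - b :: real\<bar>"
proof -
  have "\<bar>cos a - cos b\<bar> = 2 * \<bar>sin ((a + b) / 2)\<bar> * \<bar>sin ((b - a) / 2)\<bar>"
    by (simp add: cos_diff_cos abs_mult)
  also have "\<dots> \<le> 2 * 1 * \<bar>(b - a) / 2\<bar>"
    by (intro mult_mono abs_sin_x_le_abs_x) auto
  finally show ?thesis
    by simp
qed

lemma shift_kernel_lipschitz:
  assumes "finite I" "I \<noteq> {}"
    and freq: "\<And>j k. j \<in> I \<Longrightarrow> k < d \<Longrightarrow> \<bar>fr j k\<bar> \<le> int L"
    and close: "\<And>k. k < d \<Longrightarrow> \<bar>z k - z' k\<bar> \<le> h"
  shows "\<bar>shift_kernel d I fr z - shift_kernel d I fr z'\<bar> \<le> real d * real L * h"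
proof -
  have "\<bar>cos (freq_dot d (fr j) z) - cos (freq_dot d (fr j) z')\<bar> \<le> real d * real L * h"
    if j: "j \<in> I" for j
  proof -
    have "\<bar>cos (freq_dot d (fr j) z) - cos (freq_dot d (fr j) z')\<bar>
        \<le> \<bar>\<Sum>k<d. of_int (fr j k) * (z k - z' k)\<bar>"
      using abs_cos_diff_le by (simp add: freq_dot_def sum_subtractf right_diff_distrib)
    also have "\<dots> \<le> (\<Sum>k<d. real L * h)"
    proof (intro order_trans[OF sum_abs] sum_mono)
      fix k assume "k \<in> {..<d}"
      then have k: "k < d"
        by simp
      have "\<bar>real_of_int (fr j k)\<bar> \<le> real L"
        using freq[OF j k] by linarith
      with close[OF k] show "\<bar>of_int (fr j k) * (z k - z' k)\<bar> \<le> real L * h"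
        by (simp add: abs_mult mult_mono)
    qed
    finally show ?thesis
      by simp
  qed
  then have "\<bar>\<Sum>j\<in>I. cos (freq_dot d (fr j) z) - cos (freq_dot d (fr j) z')\<bar>
      \<le> real (card I) * (real d * real L * h)"
    by (intro order_trans[OF sum_abs]) (simp add: sum_bounded_above)
  moreover have "card I > 0"
    using assms(1,2) by (simp add: card_gt_0_iff)
  ultimately show ?thesis
    by (simp add: shift_kernel_def sum_subtractf abs_mult field_simps flip: right_diff_distrib)
qed

section \<open>Uniform concentration of the sampled kernel\<close>

lemma Pi_pmf_sample_mean_deviation:
  fixes g :: "'a \<Rightarrow> real"
  assumes fin: "finite A" and ne: "A \<noteq> {}" and D: "D > 0" and t: "t \<ge> 0"
    and bounded: "\<And>a. \<bar>g a\<bar> \<le> 1"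
  shows "measure_pmf.prob (Pi_pmf {..<D} dflt (\<lambda>_. pmf_of_set A))
     {om. t \<le> \<bar>(1 / real D) * (\<Sum>j<D. g (om j)) - (1 / real (card A)) * (\<Sum>a\<in>A. g a)\<bar>}
     \<le> 2 * exp (- real D * t\<^sup>2 / 2)"
proof -
  define P where "P = Pi_pmf {..<D} dflt (\<lambda>_. pmf_of_set A)"
  define m where "m = (1 / real (card A)) * (\<Sum>a\<in>A. g a)"
  have mean: "measure_pmf.expectation P (\<lambda>om. g (om j)) = m" if "j < D" for j
  proof -
    have "measure_pmf.expectation P (\<lambda>om. g (om j)) = measure_pmf.expectation (map_pmf (\<lambda>om. om j) P) g"
      by simp
    also have "map_pmf (\<lambda>om. om j) P = pmf_of_set A"
      using that by (simp add: P_def Pi_pmf_component)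
    finally show ?thesis
      using fin ne by (simp add: integral_pmf_of_set m_def)
  qed
  interpret Hoeffding_ineq "measure_pmf P" "{..<D}" "\<lambda>j om. g (om j)" "\<lambda>_. -1" "\<lambda>_. 1"
      "\<Sum>j<D. measure_pmf.expectation P (\<lambda>om. g (om j))"
  proof unfold_locales
    show "prob_space.indep_vars (measure_pmf P) (\<lambda>_. borel) (\<lambda>j om. g (om j)) {..<D}"
      unfolding P_def
      by (rule prob_space.indep_vars_compose2[OF measure_pmf.prob_space_axioms indep_vars_Pi_pmf]) auto
  qed (use bounded in \<open>auto simp: abs_le_iff\<close>)
  have "measure_pmf.prob P {om. real D * t \<le> \<bar>(\<Sum>j<D. g (om j)) - real D * m\<bar>}
      \<le> 2 * exp (- 2 * (real D * t)\<^sup>2 / (\<Sum>j<D. (1 - (-1::real))\<^sup>2))"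
    using Hoeffding_ineq_abs_ge[of "real D * t"] t D by (simp add: mean)
  also have "- 2 * (real D * t)\<^sup>2 / (\<Sum>j<D. (1 - (-1::real))\<^sup>2) = - real D * t\<^sup>2 / 2"
    using D by (simp add: power2_eq_square field_simps)
  also have "{om. real D * t \<le> \<bar>(\<Sum>j<D. g (om j)) - real D * m\<bar>}
      = {om. t \<le> \<bar>(1 / real D) * (\<Sum>j<D. g (om j)) - m\<bar>}"
  proof -
    have "\<bar>s - real D * m\<bar> = real D * \<bar>(1 / real D) * s - m\<bar>" for s
      using D by (simp add: abs_mult_pos' field_simps flip: abs_mult)
    then show ?thesis
      using D by simp
  qed
  finally show ?thesis
    by (simp add: P_def m_def)
qed

definition grid :: "nat \<Rightarrow> real \<Rightarrow> nat \<Rightarrow> (nat \<Rightarrow> real) set" where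
  "grid d h R = (\<lambda>m k. h * of_int (m k)) ` PiE {..<d} (\<lambda>_. {- int R..int R})"

lemma finite_grid: "finite (grid d h R)"
  by (simp add: grid_def finite_PiE)

lemma card_grid_le: "card (grid d h R) \<le> (2 * R + 1) ^ d"
proof -
  have "card (grid d h R) \<le> card (PiE {..<d} (\<lambda>_. {- int R..int R}))"
    unfolding grid_def by (rule card_image_le) (simp add: finite_PiE)
  also have "card {- int R..int R} = 2 * R + 1"
    by simp
  then have "card (PiE {..<d} (\<lambda>_. {- int R..int R})) = (2 * R + 1) ^ d"
    by (simp add: card_PiE)
  finally show ?thesis .
qed

lemma exists_grid_point_close:
  fixes z :: "nat \<Rightarrow> real"
  assumes h: "h > 0" and r: "r \<ge> 0" and bound: "\<forall>k<d. \<bar>z k\<bar> \<le> r"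
  shows "\<exists>z'\<in>grid d h (nat \<lceil>r / h\<rceil>). \<forall>k<d. \<bar>z k - z' k\<bar> \<le> h"
proof -
  define R where "R = nat \<lceil>r / h\<rceil>"
  define m where "m = restrict (\<lambda>k. \<lfloor>z k / h\<rfloor>) {..<d}"
  have "\<lfloor>z k / h\<rfloor> \<in> {- int R..int R}" if "k < d" for k
  proof -
    have "- (r / h) \<le> z k / h" "z k / h \<le> r / h"
      using bound[rule_format, OF that] h by (simp_all add: field_simps abs_le_iff)
    then have "- \<lceil>r / h\<rceil> \<le> \<lfloor>z k / h\<rfloor>" "\<lfloor>z k / h\<rfloor> \<le> \<lceil>r / h\<rceil>"
      by linarith+
    moreover have "0 \<le> r / h"
      using r h by simp
    then have "0 \<le> \<lceil>r / h\<rceil>"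
      by simp
    ultimately show ?thesis
      by (simp add: R_def)
  qed
  then have "m \<in> PiE {..<d} (\<lambda>_. {- int R..int R})"
    by (simp add: m_def)
  then have "(\<lambda>k. h * of_int (m k)) \<in> grid d h R"
    unfolding grid_def by (rule image_eqI[rotated]) simp
  moreover have "\<bar>z k - h * of_int (m k)\<bar> \<le> h" if "k < d" for k
  proof -
    have "of_int \<lfloor>z k / h\<rfloor> * h \<le> z k" "z k < (of_int \<lfloor>z k / h\<rfloor> + 1) * h"
      using h by (simp_all only: floor_divide_lower floor_divide_upper)
    with that show ?thesis
      by (simp add: m_def algebra_simps)
  qed
  ultimately show ?thesis
    unfolding R_def[symmetric] by (intro bexI[of _ "\<lambda>k. h * of_int (m k)"]) simp_all
qed

lemma finite_spectrum: "finite (spectrum d L)"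
  by (simp add: spectrum_def finite_PiE)

lemma spectrum_nonempty: "spectrum d L \<noteq> {}"
  by (simp add: spectrum_def PiE_eq_empty_iff)

lemma abs_le_of_mem_spectrum: "w \<in> spectrum d L \<Longrightarrow> k < d \<Longrightarrow> \<bar>w k\<bar> \<le> int L"
  by (force simp: spectrum_def PiE_iff abs_le_iff)

lemma sampled_frequency_in_spectrum:
  "om \<in> set_pmf (distinct_sampling d L D) \<Longrightarrow> j < D \<Longrightarrow> om j \<in> spectrum d L"
  using finite_spectrum[of d L] spectrum_nonempty[of d L]
  by (auto simp: distinct_sampling_def set_Pi_pmf PiE_dflt_def)

lemma shift_kernel_deviation_le_nearby:
  fixes D :: nat
  assumes D: "D \<ge> 1" and sampled: "\<forall>j<D. om j \<in> spectrum d L"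
    and close: "\<forall>k<d. \<bar>z k - z' k\<bar> \<le> h"
  shows "\<bar>shift_kernel d {..<D} om z - shift_kernel d (spectrum d L) id z\<bar>
    \<le> \<bar>shift_kernel d {..<D} om z' - shift_kernel d (spectrum d L) id z'\<bar> + 2 * (real d * real L * h)"
proof -
  have "{..<D} \<noteq> {}"
    using D by (simp add: lessThan_empty_iff)
  moreover have "\<bar>om j k\<bar> \<le> int L" if "j \<in> {..<D}" "k < d" for j k
    using sampled that abs_le_of_mem_spectrum by blast
  ultimately have "\<bar>shift_kernel d {..<D} om z - shift_kernel d {..<D} om z'\<bar> \<le> real d * real L * h"
    using close by (intro shift_kernel_lipschitz) auto
  moreover have "\<bar>shift_kernel d (spectrum d L) id z - shift_kernel d (spectrum d L) id z'\<bar>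
      \<le> real d * real L * h"
    using close by (intro shift_kernel_lipschitz finite_spectrum spectrum_nonempty)
      (auto intro: abs_le_of_mem_spectrum)
  ultimately show ?thesis
    by linarith
qed

lemma shift_kernel_uniform_deviation:
  fixes Z :: "(nat \<Rightarrow> real) set"
  assumes d: "d \<ge> 1" and L: "L \<ge> 1" and D: "D \<ge> 1" and eta: "eta > 0" and r: "r \<ge> 0"
    and bound: "\<forall>z\<in>Z. \<forall>k<d. \<bar>z k\<bar> \<le> r"
  defines "h \<equiv> eta / (4 * real d * real L)"
  defines "R \<equiv> nat \<lceil>r / h\<rceil>"
  shows "measure_pmf.prob (distinct_sampling d L D)
           {om. \<forall>z\<in>Z. \<bar>shift_kernel d {..<D} om z - shift_kernel d (spectrum d L) id z\<bar> \<le> eta}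
         \<ge> 1 - real ((2 * R + 1) ^ d) * (2 * exp (- real D * (eta / 2)\<^sup>2 / 2))"
proof -
  define P where "P = distinct_sampling d L D"
  define Good where "Good = {om. \<forall>z\<in>Z.
      \<bar>shift_kernel d {..<D} om z - shift_kernel d (spectrum d L) id z\<bar> \<le> eta}"
  define bad where "bad z = {om. eta / 2 \<le>
      \<bar>shift_kernel d {..<D} om z - shift_kernel d (spectrum d L) id z\<bar>}" for z
  define G where "G = grid d h R"
  have h: "h > 0" and dLh: "real d * real L * h = eta / 4"
    using eta d L by (simp_all add: h_def)
  have prob_bad: "measure_pmf.prob P (bad z) \<le> 2 * exp (- real D * (eta / 2)\<^sup>2 / 2)" for z
    using Pi_pmf_sample_mean_deviation[OF finite_spectrum spectrum_nonempty,
        where D=D and t="eta / 2" and g="\<lambda>w. cos (freq_dot d w z)" and dflt="\<lambda>_. 0"] D eta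
    by (simp add: P_def bad_def distinct_sampling_def shift_kernel_def)
  \<comment> \<open>Between a point and its nearest grid point both kernels move by at most \<open>\<eta>/4\<close>.\<close>
  have "om \<in> (\<Union>z'\<in>G. bad z')" if om: "om \<in> set_pmf P" and "om \<notin> Good" for om
  proof -
    obtain z where "z \<in> Z" and far:
        "eta < \<bar>shift_kernel d {..<D} om z - shift_kernel d (spectrum d L) id z\<bar>"
      using \<open>om \<notin> Good\<close> by (auto simp: Good_def)
    then obtain z' where "z' \<in> G" and close: "\<forall>k<d. \<bar>z k - z' k\<bar> \<le> h"
      using exists_grid_point_close[OF h r] bound unfolding G_def R_def by blast
    have "\<forall>j<D. om j \<in> spectrum d L"
      using om sampled_frequency_in_spectrum unfolding P_def by blast
    with D close far dLh have "om \<in> bad z'"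
      using shift_kernel_deviation_le_nearby[of D om d L z z' h] by (auto simp: bad_def)
    with \<open>z' \<in> G\<close> show ?thesis
      by blast
  qed
  then have "measure_pmf.prob P (UNIV - Good) \<le> measure_pmf.prob P (\<Union>z\<in>G. bad z)"
    by (intro measure_pmf.finite_measure_mono_AE AE_pmfI) auto
  also have "\<dots> \<le> (\<Sum>z\<in>G. measure_pmf.prob P (bad z))"
    by (rule measure_pmf.finite_measure_subadditive_finite) (simp_all add: G_def finite_grid)
  also have "\<dots> \<le> real (card G) * (2 * exp (- real D * (eta / 2)\<^sup>2 / 2))"
    using prob_bad sum_bounded_above[of G "\<lambda>z. measure_pmf.prob P (bad z)"] by simp
  also have "\<dots> \<le> real ((2 * R + 1) ^ d) * (2 * exp (- real D * (eta / 2)\<^sup>2 / 2))"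
    unfolding G_def using card_grid_le
    by (intro mult_right_mono) (simp_all only: of_nat_le_iff, simp)
  finally show ?thesis
    using measure_pmf.prob_compl[of Good P] by (simp add: P_def Good_def)
qed

lemma grid_size_le:
  assumes d: "d \<ge> 1" and L: "L \<ge> 1" and r: "r \<ge> 0" and eta: "0 < eta" "eta < 2"
  defines "h \<equiv> eta / (4 * real d * real L)"
  shows "real (2 * nat \<lceil>r / h\<rceil> + 1) \<le> 14 * real d * (real L)\<^sup>2 * (r + 1) / eta"
proof -
  have "1 \<le> real d" "1 \<le> real L"
    using d L by simp_all
  then have dL: "1 \<le> real d * real L" "real d * real L \<le> real d * (real L)\<^sup>2"
    using mult_mono[of 1 "real d" 1 "real L"] by (simp_all add: power2_eq_square)
  have "0 \<le> r / h"
    using r eta by (simp add: h_def)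
  then have "real (nat \<lceil>r / h\<rceil>) \<le> r / h + 1"
    by simp
  then have "real (2 * nat \<lceil>r / h\<rceil> + 1) \<le> 8 * (real d * real L) * r / eta + 3"
    using eta by (simp add: h_def field_simps)
  also have "\<dots> \<le> 8 * (real d * (real L)\<^sup>2) * r / eta + 6 * (real d * (real L)\<^sup>2) / eta"
  proof -
    have "8 * (real d * real L) * r / eta \<le> 8 * (real d * (real L)\<^sup>2) * r / eta"
      using dL r eta by (intro divide_right_mono mult_right_mono) simp_all
    moreover have "3 \<le> 6 * (real d * (real L)\<^sup>2) / eta"
      using dL eta by (simp add: pos_le_divide_eq)
    ultimately show ?thesis
      by linarith
  qed
  also have "\<dots> \<le> 14 * real d * (real L)\<^sup>2 * (r + 1) / eta"
    using eta r dL by (simp add: field_simps)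
  finally show ?thesis .
qed

lemma union_bound_eq_exp:
  assumes "N > 0"
  shows "real (N ^ d) * (2 * exp (- real D * (eta / 2)\<^sup>2 / 2))
    = exp (ln 2 + real d * ln (real N) - real D * eta\<^sup>2 / 8)"
proof -
  have "real (N ^ d) = exp (real d * ln (real N))"
    using assms by (simp add: exp_of_nat_mult)
  moreover have "- real D * (eta / 2)\<^sup>2 / 2 = - (real D * eta\<^sup>2 / 8)"
    by (simp add: power2_eq_square)
  moreover have "exp (ln 2 + X - Y) = 2 * exp X * exp (- Y)" for X Y :: real
    by (simp add: exp_diff exp_add exp_minus divide_inverse)
  ultimately show ?thesis
    by (simp only: mult_ac)
qed

lemma covering_failure_prob_le:
  assumes d: "d \<ge> 1" and L: "L \<ge> 1" and r: "r \<ge> 0" and eta: "0 < eta" "eta < 2"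
    and delta: "0 < delta" "delta < 1"
    and sample: "real D \<ge> 16 * real d / eta\<^sup>2 * (ln (14 * real d * (real L)\<^sup>2 * (r + 1) / eta) - ln delta)"
  defines "h \<equiv> eta / (4 * real d * real L)"
  defines "R \<equiv> nat \<lceil>r / h\<rceil>"
  shows "real ((2 * R + 1) ^ d) * (2 * exp (- real D * (eta / 2)\<^sup>2 / 2)) \<le> delta"
proof -
  define Q where "Q = ln (14 * real d * (real L)\<^sup>2 * (r + 1) / eta)"
  have grid: "real (2 * R + 1) \<le> 14 * real d * (real L)\<^sup>2 * (r + 1) / eta"
    unfolding R_def h_def using d L r eta by (rule grid_size_le)
  have "ln 2 \<le> Q"
  proof -
    have "1 \<le> real d" "1 \<le> (real L)\<^sup>2" "1 \<le> r + 1"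
      using d L r by (simp_all add: one_le_power)
    then have "1 * 1 * 1 \<le> real d * (real L)\<^sup>2 * (r + 1)"
      by (intro mult_mono) simp_all
    then have "2 \<le> 14 * real d * (real L)\<^sup>2 * (r + 1) / eta"
      using eta by (simp add: field_simps)
    then show ?thesis
      by (simp add: Q_def)
  qed
  moreover have "0 < ln (2::real)"
    by simp
  ultimately have Q: "0 \<le> Q"
    by linarith
  have "ln (real (2 * R + 1)) \<le> Q"
    unfolding Q_def using grid by (subst ln_le_cancel_iff) auto
  then have "real d * ln (real (2 * R + 1)) \<le> real d * Q"
    by (simp add: mult_left_mono)
  moreover have "Q \<le> real d * Q"
    using Q d by (metis mult_1 mult_right_mono of_nat_1 of_nat_mono)
  moreover have "ln delta < 0" and "real d * ln delta \<le> ln delta"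
    using delta d by (simp_all add: mult_le_cancel_right1)
  moreover have "2 * real d * (Q - ln delta) = 2 * (real d * Q) - 2 * (real d * ln delta)"
    by (simp add: algebra_simps)
  \<comment> \<open>Here \<open>d \<ge> 1\<close>, \<open>ln 2 \<le> Q\<close> and \<open>ln \<delta> < 0\<close> absorb the union bound into \<open>2 d (Q - ln \<delta>)\<close>.\<close>
  ultimately have "ln 2 + real d * ln (real (2 * R + 1)) - ln delta \<le> 2 * real d * (Q - ln delta)"
    using \<open>ln 2 \<le> Q\<close> by linarith
  also have "\<dots> \<le> real D * eta\<^sup>2 / 8"
    using sample eta by (simp add: Q_def field_simps)
  finally have exponent: "ln 2 + real d * ln (real (2 * R + 1)) - real D * eta\<^sup>2 / 8 \<le> ln delta"
    by simp
  have "real ((2 * R + 1) ^ d) * (2 * exp (- real D * (eta / 2)\<^sup>2 / 2))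
      = exp (ln 2 + real d * ln (real (2 * R + 1)) - real D * eta\<^sup>2 / 8)"
    by (rule union_bound_eq_exp) simp
  also have "\<dots> \<le> exp (ln delta)"
    using exponent by simp
  also have "\<dots> = delta"
    using delta by simp
  finally show ?thesis .
qed

section \<open>Approximating the VQC model by the RFF model\<close>

lemma abs_diff_le_dist_d: "k < d \<Longrightarrow> \<bar>x k - x' k\<bar> \<le> dist_d d x x'"
  unfolding dist_d_def
  by (rule real_le_rsqrt) (simp add: member_le_sum[of k "{..<d}" "\<lambda>j. (x j - x' j)\<^sup>2"])

lemma dist_d_le_diam_d:
  assumes X: "compact X" and "x \<in> X" "x' \<in> X"
  shows "dist_d d x x' \<le> diam_d d X"
proof -
  define f where "f p = dist_d d (fst p) (snd p)" for p :: "(nat \<Rightarrow> real) \<times> (nat \<Rightarrow> real)"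
  have "continuous_on UNIV f"
    unfolding f_def dist_d_def
    by (intro continuous_intros continuous_on_product_then_coordinatewise
        continuous_on_fst continuous_on_snd continuous_on_id)
  then have "compact (f ` (X \<times> X))"
    using X by (intro compact_continuous_image compact_Times) (auto intro: continuous_on_subset)
  then have "bdd_above (f ` (X \<times> X))"
    by (intro bounded_imp_bdd_above compact_imp_bounded)
  then have "f (x, x') \<le> (SUP p\<in>X \<times> X. f p)"
    using assms(2,3) by (intro cSUP_upper) auto
  then show ?thesis
    by (simp add: diam_d_def f_def)
qed

lemma vqc_rff_diff_le:
  assumes lam: "lam > 0" and xs: "\<And>i. i < M \<Longrightarrow> xs i \<in> X" and x: "x \<in> X"
    and dev: "\<And>x x'. x \<in> X \<Longrightarrow> x' \<in> X \<Longrightarrow>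
      \<bar>shift_kernel d (spectrum d L) id (x - x') - shift_kernel d {..<D} om (x - x')\<bar> \<le> eta"
  shows "\<bar>vqc_model d L M xs ys lam x - rff_model d D om M xs ys lam x\<bar>
    \<le> eta * sigma_y M ys * (1 + lam) / lam\<^sup>2"
proof -
  obtain r where
    r: "\<And>i. i < M \<Longrightarrow> r i + (1 / (real M * lam))
          * (\<Sum>l<M. feature_kernel d (spectrum d L) id (xs i) (xs l) * r l) = ys i"
    and vqc: "\<And>x. vqc_model d L M xs ys lam x
          = (1 / (real M * lam)) * (\<Sum>i<M. r i * feature_kernel d (spectrum d L) id x (xs i))"
    using ridge_model_eq_kernel_expansion[OF finite_spectrum lam] unfolding vqc_model_def by blast
  obtain r' where
    r': "\<And>i. i < M \<Longrightarrow> r' i + (1 / (real M * lam))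
          * (\<Sum>l<M. feature_kernel d {..<D} om (xs i) (xs l) * r' l) = ys i"
    and rff: "\<And>x. rff_model d D om M xs ys lam x
          = (1 / (real M * lam)) * (\<Sum>i<M. r' i * feature_kernel d {..<D} om x (xs i))"
    using ridge_model_eq_kernel_expansion[OF finite_lessThan lam] unfolding rff_model_def by blast
  show ?thesis
    unfolding vqc rff
    by (rule ridge_prediction_perturbation[OF lam psd_matrix_feature_kernel psd_matrix_feature_kernel r r'])
       (simp_all add: feature_kernel_eq_shift_kernel abs_shift_kernel_le_1 dev xs x)
qed

lemma sample_size_in_terms_of_eta:
  assumes d: "d \<ge> 1" and L: "L \<ge> 1" and sg: "sg \<ge> 0" and dX: "dX > 0"
    and lam: "lam > 0" and eps: "eps > 0"
  defines "eta \<equiv> eps * lam\<^sup>2 / ((sg + 1) * (1 + lam))"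
  shows "16 * (real d * (sg + 1)\<^sup>2 * (1 + lam)\<^sup>2 / (lam ^ 4 * eps\<^sup>2)) *
      (ln (real d * (real L)\<^sup>2 * dX) + ln (14 * (sg + 1) * (1 + 1 / dX) * (1 + lam) / (eps * lam\<^sup>2)) - ln delta)
    = 16 * real d / eta\<^sup>2 * (ln (14 * real d * (real L)\<^sup>2 * (dX + 1) / eta) - ln delta)"
proof -
  have "real d * (sg + 1)\<^sup>2 * (1 + lam)\<^sup>2 / (lam ^ 4 * eps\<^sup>2) = real d / eta\<^sup>2"
    using sg lam eps by (simp add: eta_def field_simps power2_eq_square power4_eq_xxxx)
  moreover have "ln (real d * (real L)\<^sup>2 * dX) + ln (14 * (sg + 1) * (1 + 1 / dX) * (1 + lam) / (eps * lam\<^sup>2))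
      = ln (real d * (real L)\<^sup>2 * dX * (14 * (sg + 1) * (1 + 1 / dX) * (1 + lam) / (eps * lam\<^sup>2)))"
    using d L sg dX lam eps by (intro ln_mult_pos[symmetric]) (simp_all add: add_pos_pos)
  moreover have "real d * (real L)\<^sup>2 * dX * (14 * (sg + 1) * (1 + 1 / dX) * (1 + lam) / (eps * lam\<^sup>2))
      = 14 * real d * (real L)\<^sup>2 * (dX + 1) / eta"
    using sg dX lam eps by (simp add: eta_def field_simps)
  ultimately show ?thesis
    by simp
qed

lemma prob_kernel_deviation_on_differences_ge:
  fixes X :: "(nat \<Rightarrow> real) set"
  assumes d: "d \<ge> 1" and L: "L \<ge> 1" and D: "D \<ge> 1" and X: "compact X"
    and eta: "0 < eta" "eta < 2" and delta: "0 < delta" "delta < 1" and dX: "diam_d d X > 0"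
    and sample: "real D \<ge> 16 * real d / eta\<^sup>2
      * (ln (14 * real d * (real L)\<^sup>2 * (diam_d d X + 1) / eta) - ln delta)"
  shows "measure_pmf.prob (distinct_sampling d L D) {om. \<forall>x\<in>X. \<forall>x'\<in>X.
      \<bar>shift_kernel d {..<D} om (x - x') - shift_kernel d (spectrum d L) id (x - x')\<bar> \<le> eta}
    \<ge> 1 - delta"
proof -
  define Z where "Z = {x - x' | x x'. x \<in> X \<and> x' \<in> X}"
  have "\<bar>z k\<bar> \<le> diam_d d X" if "z \<in> Z" "k < d" for z k
  proof -
    obtain x x' where "z = x - x'" "x \<in> X" "x' \<in> X"
      using \<open>z \<in> Z\<close> by (auto simp: Z_def)
    then show ?thesis
      using abs_diff_le_dist_d[OF \<open>k < d\<close>, of x x'] dist_d_le_diam_d[OF X, of x x' d] by simp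
  qed
  then have "\<forall>z\<in>Z. \<forall>k<d. \<bar>z k\<bar> \<le> diam_d d X"
    by blast
  from shift_kernel_uniform_deviation[OF d L D eta(1) less_imp_le[OF dX] this]
    covering_failure_prob_le[OF d L less_imp_le[OF dX] eta delta sample]
  have "measure_pmf.prob (distinct_sampling d L D) {om. \<forall>z\<in>Z.
      \<bar>shift_kernel d {..<D} om z - shift_kernel d (spectrum d L) id z\<bar> \<le> eta} \<ge> 1 - delta"
    by linarith
  moreover have "{om. \<forall>z\<in>Z. \<bar>shift_kernel d {..<D} om z - shift_kernel d (spectrum d L) id z\<bar> \<le> eta}
      = {om. \<forall>x\<in>X. \<forall>x'\<in>X.
          \<bar>shift_kernel d {..<D} om (x - x') - shift_kernel d (spectrum d L) id (x - x')\<bar> \<le> eta}"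
    by (auto simp: Z_def)
  ultimately show ?thesis
    by simp
qed

lemma shift_kernel_deviation_le_degenerate:
  fixes D :: nat
  assumes D: "D \<ge> 1" and X: "compact X" and x: "x \<in> X" "x' \<in> X" and eta: "0 \<le> eta"
    and degenerate: "diam_d d X \<le> 0 \<or> 2 \<le> eta"
  shows "\<bar>shift_kernel d {..<D} om (x - x') - shift_kernel d (spectrum d L) id (x - x')\<bar> \<le> eta"
proof (cases "2 \<le> eta")
  case True
  then show ?thesis
    using abs_shift_kernel_le_1[of d "{..<D}" om "x - x'"]
      abs_shift_kernel_le_1[of d "spectrum d L" id "x - x'"]
    by linarith
next
  case False
  with degenerate have "(x - x') k = 0" if "k < d" for k
    using abs_diff_le_dist_d[OF that, of x x'] dist_d_le_diam_d[OF X x, of d] by simp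
  then show ?thesis
    using D eta finite_spectrum spectrum_nonempty
    by (simp add: shift_kernel_eq_1 lessThan_empty_iff)
qed

lemma vqc_rff_uniform_approximation:
  fixes X :: "(nat \<Rightarrow> real) set"
  assumes d: "d \<ge> 1" and L: "L \<ge> 1" and D: "D \<ge> 1" and X: "compact X"
    and xs: "\<forall>i<M. xs i \<in> X" and lam: "lam > 0" and eps: "eps > 0"
    and delta: "0 < delta" "delta < 1"
    and sample: "real D \<ge> 16 * (real d * (\<bar>sigma_y M ys\<bar> + 1)\<^sup>2 * (1 + lam)\<^sup>2 / (lam ^ 4 * eps\<^sup>2)) *
      (ln (real d * (real L)\<^sup>2 * diam_d d X)
        + ln (14 * (\<bar>sigma_y M ys\<bar> + 1) * (1 + 1 / \<bar>diam_d d X\<bar>) * (1 + lam) / (eps * lam\<^sup>2))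
        - ln delta)"
  shows "measure_pmf.prob (distinct_sampling d L D)
      {om. \<forall>x\<in>X. \<bar>vqc_model d L M xs ys lam x - rff_model d D om M xs ys lam x\<bar> \<le> eps}
    \<ge> 1 - delta"
proof -
  define sg where "sg = sigma_y M ys"
  define dX where "dX = diam_d d X"
  define eta where "eta = eps * lam\<^sup>2 / ((sg + 1) * (1 + lam))"
  define Good where "Good = {om. \<forall>x\<in>X. \<forall>x'\<in>X.
      \<bar>shift_kernel d {..<D} om (x - x') - shift_kernel d (spectrum d L) id (x - x')\<bar> \<le> eta}"
  have sg: "sg \<ge> 0"
    by (simp add: sg_def sigma_y_def sum_nonneg)
  have eta: "eta > 0"
    using eps lam sg by (simp add: eta_def)
  have "eta * sg * (1 + lam) / lam\<^sup>2 \<le> eta * (sg + 1) * (1 + lam) / lam\<^sup>2"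
    using eta lam by (simp add: divide_right_mono)
  also have "\<dots> = eps"
    using sg lam by (simp add: eta_def)
  finally have eta_eps: "eta * sg * (1 + lam) / lam\<^sup>2 \<le> eps" .
  have "Good \<subseteq> {om. \<forall>x\<in>X. \<bar>vqc_model d L M xs ys lam x - rff_model d D om M xs ys lam x\<bar> \<le> eps}"
  proof safe
    fix om x assume "om \<in> Good" "x \<in> X"
    then have "\<bar>vqc_model d L M xs ys lam x - rff_model d D om M xs ys lam x\<bar>
        \<le> eta * sg * (1 + lam) / lam\<^sup>2"
      unfolding sg_def using lam xs
      by (intro vqc_rff_diff_le) (auto simp: Good_def abs_minus_commute)
    with eta_eps show "\<bar>vqc_model d L M xs ys lam x - rff_model d D om M xs ys lam x\<bar> \<le> eps"
      by linarith
  qed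
  then have "measure_pmf.prob (distinct_sampling d L D) Good
      \<le> measure_pmf.prob (distinct_sampling d L D)
          {om. \<forall>x\<in>X. \<bar>vqc_model d L M xs ys lam x - rff_model d D om M xs ys lam x\<bar> \<le> eps}"
    by (intro measure_pmf.finite_measure_mono) simp_all
  moreover have "measure_pmf.prob (distinct_sampling d L D) Good \<ge> 1 - delta"
  proof (cases "dX > 0 \<and> eta < 2")
    case True
    with sg have "\<bar>sg\<bar> = sg" "\<bar>dX\<bar> = dX"
      by simp_all
    with sample True have "real D \<ge> 16 * real d / eta\<^sup>2
        * (ln (14 * real d * (real L)\<^sup>2 * (dX + 1) / eta) - ln delta)"
      unfolding eta_def sg_def[symmetric] dX_def[symmetric]
      using sample_size_in_terms_of_eta[OF d L sg _ lam eps] by simp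
    then show ?thesis
      unfolding Good_def using True eta delta
      by (intro prob_kernel_deviation_on_differences_ge[OF d L D X]) (simp_all add: dX_def)
  next
    case False
    then have "Good = UNIV"
      using D X eta
      by (auto simp: Good_def dX_def not_less intro!: shift_kernel_deviation_le_degenerate)
    then show ?thesis
      using delta by simp
  qed
  ultimately show ?thesis
    by linarith
qed

theorem theorem1:
  "\<exists>C1 C2 :: real \<Rightarrow> real \<Rightarrow> real. (\<forall>s r. C1 s r > 0 \<and> C2 s r > 0) \<and>
   (\<exists>K::real. K > 0 \<and>
    (\<forall>(d::nat) (L::nat) (X::(nat \<Rightarrow> real) set) (M::nat) (xs::nat \<Rightarrow> nat \<Rightarrow> real)
       (ys::nat \<Rightarrow> real) (lam::real) (eps::real) (delta::real) (D::nat).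
       d \<ge> 1 \<longrightarrow> L \<ge> 1 \<longrightarrow> M \<ge> 1 \<longrightarrow> D \<ge> 1 \<longrightarrow>
       compact X \<longrightarrow> (\<forall>x\<in>X. in_Rd d x) \<longrightarrow> (\<forall>i<M. xs i \<in> X) \<longrightarrow>
       lam > 0 \<longrightarrow> eps > 0 \<longrightarrow> 0 < delta \<longrightarrow> delta < 1 \<longrightarrow>
       (let sy = sigma_y M ys; dX = diam_d d X;
            c1 = C1 sy dX; c2 = C2 sy dX in
        real D \<ge> K * (real d * c1 * (1 + lam)^2 / (lam^4 * eps^2)) *
          (ln (real d * real L ^ 2 * dX) + ln (c2 * (1 + lam) / (eps * lam^2)) - ln delta))
       \<longrightarrow>
       measure_pmf.prob (distinct_sampling d L D)
         {om. \<forall>x\<in>X. \<bar>vqc_model d L M xs ys lam x - rff_model d D om M xs ys lam x\<bar> \<le> eps}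
         \<ge> 1 - delta))"
proof -
  define C1 :: "real \<Rightarrow> real \<Rightarrow> real" where "C1 s r = (\<bar>s\<bar> + 1)\<^sup>2" for s r
  define C2 :: "real \<Rightarrow> real \<Rightarrow> real" where "C2 s r = 14 * (\<bar>s\<bar> + 1) * (1 + 1 / \<bar>r\<bar>)" for s r
  have "C1 s r > 0 \<and> C2 s r > 0" for s r
  proof -
    have "0 < \<bar>s\<bar> + 1" "0 < 1 + 1 / \<bar>r\<bar>"
      by (simp_all add: add_nonneg_pos add_pos_nonneg)
    then show ?thesis
      by (simp add: C1_def C2_def)
  qed
  then show ?thesis
    by (intro exI[of _ C1] exI[of _ C2] conjI exI[of _ "16::real"] allI impI)
       (auto simp: Let_def C1_def C2_def intro: vqc_rff_uniform_approximation)
qed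

end
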